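(* Let $L\subseteq B_i$ be an SINR-feasible set of links in a bucket $B_i$, let $e\in B_i$, and let $L^\ell=\{e'\in L: d_{e'}\le d_{e'e}\}$. Then there exists a set $G$ of at most six receivers of links in $L^\ell$ such that for every $e'\in L^\ell$ there is $g\in G$ with $d_{e'g}\le 2d_{e'e}$.
   Context: Nodes lie in the Euclidean plane. A link is $e=(s_e,r_e,P_e)$ with transmitter $s_e$, receiver $r_e$ and power $P_e>0$; $\mathcal{L}$ is the set of links. $d_e=d(s_e,r_e)$, $d_{e'e}=d(s_{e'},r_e)$, and for a point $g$, $d_{e'g}=d(s_{e'},g)$. With constants $\alpha\ge0,N>0,\beta>0$: $S_e=P_e/d_e^\alpha$, $S_{e'e}=P_{e'}/d_{e'e}^\alpha$; $L$ is SINR-feasible if $S_e/(N+\sum_{e'\in L\setminus\{e\}}S_{e'e})\ge\beta$ for all $e\in L$. Buckets: $S_{\min}=\min_{e\in\mathcal{L}}S_e$, $B_i=\{e\in\mathcal{L}:2^iS_{\min}\le S_e<2^{i+1}S_{\min}\}$. *)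

theory Defs
  imports "HOL-Analysis.Analysis"
begin

type_synonym point = "real^2"

type_synonym link = "point \<times> point \<times> real"

definition sndr :: "link \<Rightarrow> point" where "sndr e = fst e"
definition rcvr :: "link \<Rightarrow> point" where "rcvr e = fst (snd e)"
definition pwr :: "link \<Rightarrow> real" where "pwr e = snd (snd e)"

definition dlen :: "link \<Rightarrow> real" where "dlen e = dist (sndr e) (rcvr e)"
definition dcross :: "link \<Rightarrow> link \<Rightarrow> real" where "dcross e' e = dist (sndr e') (rcvr e)"

text \<open>d^alpha, with the convention d^0 = 1 (Isabelle has 0 powr 0 = 0).
  A value 0 means the path loss is zero, i.e. infinite received signal.\<close>
definition ploss :: "real \<Rightarrow> real \<Rightarrow> real" where
  "ploss \<alpha> d = (if \<alpha> = 0 then 1 else d powr \<alpha>)"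

definition sig :: "real \<Rightarrow> link \<Rightarrow> real" where
  "sig \<alpha> e = pwr e / ploss \<alpha> (dlen e)"

definition interf :: "real \<Rightarrow> link \<Rightarrow> link \<Rightarrow> real" where
  "interf \<alpha> e' e = pwr e' / ploss \<alpha> (dcross e' e)"

text \<open>SINR feasibility. Interference from a sender located exactly at the receiver
  (with alpha > 0) is infinite, hence such a set is infeasible.\<close>
definition sinr_feasible :: "real \<Rightarrow> real \<Rightarrow> real \<Rightarrow> link set \<Rightarrow> bool" where
  "sinr_feasible \<alpha> N \<beta> L \<longleftrightarrow>
     (\<forall>e\<in>L. (\<forall>e'\<in>L - {e}. ploss \<alpha> (dcross e' e) > 0) \<and>
        sig \<alpha> e / (N + (\<Sum>e'\<in>L - {e}. interf \<alpha> e' e)) \<ge> \<beta>)"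

definition Smin :: "real \<Rightarrow> link set \<Rightarrow> real" where
  "Smin \<alpha> \<L> = Min (sig \<alpha> ` \<L>)"

definition bucket :: "real \<Rightarrow> link set \<Rightarrow> nat \<Rightarrow> link set" where
  "bucket \<alpha> \<L> i = {e\<in>\<L>. 2^i * Smin \<alpha> \<L> \<le> sig \<alpha> e \<and> sig \<alpha> e < 2^(i+1) * Smin \<alpha> \<L>}"

end

theory Submission
  imports Defs
begin

text \<open>Let \<open>L\<^sup>\<ell>\<close> be the links whose own length is at most their distance to \<open>r\<^sub>e\<close>.
  Scanning their senders in order of increasing distance to \<open>r\<^sub>e\<close>, keep a sender whenever it is
  farther from every kept sender than from \<open>r\<^sub>e\<close>. Two kept senders are then farther apart than
  both are from \<open>r\<^sub>e\<close>, so no two of them lie in the same \<open>60\<degree>\<close> sector around \<open>r\<^sub>e\<close>, and at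
  most six are kept. A discarded sender \<open>s\<close> lies within \<open>d(s, r\<^sub>e)\<close> of a kept sender \<open>s'\<close> with
  \<open>d(s', r\<^sub>e) \<le> d(s, r\<^sub>e)\<close>, whose receiver is within \<open>d(s', r\<^sub>e)\<close> of \<open>s'\<close>; hence the receivers of
  the kept links serve as \<open>G\<close>. The argument is purely geometric: of the hypotheses on \<open>L\<close> only
  its finiteness is used.\<close>

definition complex_of_point :: "point \<Rightarrow> complex" where
  "complex_of_point p = Complex (p$1) (p$2)"

lemma complex_of_point_diff: "complex_of_point p - complex_of_point q = complex_of_point (p - q)"
  by (simp add: complex_of_point_def complex_eq_iff)

lemma norm_complex_of_point: "cmod (complex_of_point p) = norm p"
  by (simp add: complex_of_point_def cmod_def norm_vec_def L2_set_def sum_2)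

lemma sq_add_sq_minus_mult_le_max_sq:
  fixes a b :: real
  assumes "0 \<le> a" "0 \<le> b"
  shows "a\<^sup>2 + b\<^sup>2 - a * b \<le> (max a b)\<^sup>2"
proof (cases "a \<le> b")
  case True
  hence "a * a \<le> a * b" using assms(1) by (rule mult_left_mono)
  thus ?thesis using True by (simp add: max_def power2_eq_square)
next
  case False
  hence "b * b \<le> a * b" using assms(2) by (intro mult_right_mono) auto
  thus ?thesis using False by (simp add: max_def power2_eq_square)
qed

lemma cmod_diff_le_max_if_Arg_close:
  fixes z w :: complex
  assumes "\<bar>Arg z - Arg w\<bar> \<le> pi/3"
  shows "cmod (z - w) \<le> max (cmod z) (cmod w)"
proof -
  define t1 t2 r1 r2 where "t1 = Arg z" and "t2 = Arg w" and "r1 = cmod z" and "r2 = cmod w"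
  have cos_ge: "2 * cos (t1 - t2) \<ge> 1"
    using assms cos_monotone_0_pi_le[of "\<bar>t1 - t2\<bar>" "pi/3"] by (simp add: t1_def t2_def cos_60)
  have "z = rcis r1 t1" "w = rcis r2 t2"
    by (simp_all add: rcis_cmod_Arg r1_def r2_def t1_def t2_def)
  hence "(cmod (z - w))\<^sup>2 = (r1 * cos t1 - r2 * cos t2)\<^sup>2 + (r1 * sin t1 - r2 * sin t2)\<^sup>2"
    by (simp add: cmod_power2)
  also have "\<dots> = r1\<^sup>2 * ((cos t1)\<^sup>2 + (sin t1)\<^sup>2) + r2\<^sup>2 * ((cos t2)\<^sup>2 + (sin t2)\<^sup>2)
       - 2 * r1 * r2 * (cos t1 * cos t2 + sin t1 * sin t2)"
    unfolding power2_eq_square by algebra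
  also have "\<dots> = r1\<^sup>2 + r2\<^sup>2 - r1 * r2 * (2 * cos (t1 - t2))"
    by (simp add: cos_diff)
  also have "\<dots> \<le> r1\<^sup>2 + r2\<^sup>2 - r1 * r2"
    using mult_left_mono[OF cos_ge, of "r1 * r2"] by (simp add: r1_def r2_def)
  also have "\<dots> \<le> (max r1 r2)\<^sup>2"
    by (rule sq_add_sq_minus_mult_le_max_sq) (simp_all add: r1_def r2_def)
  finally show ?thesis
    unfolding r1_def r2_def by (rule power2_le_imp_le) (simp add: le_max_iff_disj)
qed

definition sextant :: "complex \<Rightarrow> int" where
  "sextant z = \<lceil>(Arg z + pi) / (pi/3)\<rceil>"

lemma sextant_range: "sextant z \<in> {1..6}"
proof -
  have "- pi < Arg z" "Arg z \<le> pi" using Arg_bounded by auto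
  hence "0 < (Arg z + pi) / (pi/3)" "(Arg z + pi) / (pi/3) \<le> 6"
    by (simp_all add: divide_le_eq)
  thus ?thesis by (simp add: sextant_def ceiling_le_iff)
qed

lemma Arg_close_if_sextant_eq:
  assumes "sextant z = sextant w"
  shows "\<bar>Arg z - Arg w\<bar> \<le> pi/3"
proof -
  define x y where "x = (Arg z + pi) / (pi/3)" and "y = (Arg w + pi) / (pi/3)"
  have "\<lceil>x\<rceil> = \<lceil>y\<rceil>" using assms by (simp add: sextant_def x_def y_def)
  hence "\<bar>x - y\<bar> \<le> 1" using ceiling_correct[of x] ceiling_correct[of y] by linarith
  moreover have "x - y = (Arg z - Arg w) / (pi/3)"
    unfolding x_def y_def by (simp only: diff_divide_distrib[symmetric] add_diff_add diff_self add_0_right)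
  ultimately have "\<bar>Arg z - Arg w\<bar> / (pi/3) \<le> 1" by (simp only: abs_divide) simp
  thus ?thesis by (simp add: divide_le_eq)
qed

lemma dist_le_max_if_sextant_eq:
  assumes "sextant (complex_of_point (p - c)) = sextant (complex_of_point (q - c))"
  shows "dist p q \<le> max (dist p c) (dist q c)"
  using cmod_diff_le_max_if_Arg_close[OF Arg_close_if_sextant_eq[OF assms]]
  by (simp add: complex_of_point_diff norm_complex_of_point dist_norm)

lemma card_le_6_if_separated_around:
  fixes s :: "'a \<Rightarrow> point"
  assumes "\<forall>a\<in>R. \<forall>b\<in>R. a \<noteq> b \<longrightarrow> dist (s a) (s b) > max (dist (s a) c) (dist (s b) c)"
  shows "card R \<le> 6"
proof -
  define sec where "sec a = sextant (complex_of_point (s a - c))" for a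
  have "inj_on sec R"
    using assms dist_le_max_if_sextant_eq by (fastforce simp: sec_def intro: inj_onI)
  moreover have "sec ` R \<subseteq> {1..6}" using sextant_range by (auto simp: sec_def)
  ultimately have "card R \<le> card {1..6::int}" by (intro card_inj_on_le) auto
  thus ?thesis by simp
qed

lemma greedy_net_around:
  fixes s :: "'a \<Rightarrow> 'b::metric_space"
  assumes "finite S"
  obtains R where "R \<subseteq> S"
    and "\<forall>a\<in>R. \<forall>b\<in>R. a \<noteq> b \<longrightarrow> dist (s a) (s b) > max (dist (s a) c) (dist (s b) c)"
    and "\<forall>x\<in>S. \<exists>a\<in>R. dist (s a) c \<le> dist (s x) c \<and> dist (s x) (s a) \<le> dist (s x) c"
proof -
  have "\<exists>R\<subseteq>S. (\<forall>a\<in>R. \<forall>b\<in>R. a \<noteq> b \<longrightarrow> dist (s a) (s b) > max (dist (s a) c) (dist (s b) c)) \<and>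
     (\<forall>x\<in>S. \<exists>a\<in>R. dist (s a) c \<le> dist (s x) c \<and> dist (s x) (s a) \<le> dist (s x) c)"
    using assms
  proof (induction S rule: finite_ranking_induct[where f = "\<lambda>x. dist (s x) c"])
    case empty
    then show ?case by auto
  next
    case (insert x S)
    then obtain R where R: "R \<subseteq> S"
      "\<forall>a\<in>R. \<forall>b\<in>R. a \<noteq> b \<longrightarrow> dist (s a) (s b) > max (dist (s a) c) (dist (s b) c)"
      "\<forall>y\<in>S. \<exists>a\<in>R. dist (s a) c \<le> dist (s y) c \<and> dist (s y) (s a) \<le> dist (s y) c"
      by blast
    have closer: "dist (s a) c \<le> dist (s x) c" if "a \<in> R" for a
      using insert.hyps(2) R(1) that by blast
    show ?case
    proof (cases "\<exists>a\<in>R. dist (s x) (s a) \<le> dist (s x) c")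
      case True
      then show ?thesis using R closer by (intro exI[of _ R]) auto
    next
      case False
      hence "dist (s x) (s a) > max (dist (s x) c) (dist (s a) c)" if "a \<in> R" for a
        using closer[OF that] that by auto
      then show ?thesis
        using R by (intro exI[of _ "insert x R"]) (auto simp: dist_commute max.commute)
    qed
  qed
  with that show ?thesis by blast
qed

theorem lemma2:
  fixes \<L> L :: "link set" and e :: link and \<alpha> N \<beta> :: real and i :: nat
  assumes "finite \<L>"
    and "\<forall>f\<in>\<L>. pwr f > 0 \<and> sndr f \<noteq> rcvr f"
    and "\<alpha> \<ge> 0" and "N > 0" and "\<beta> > 0"
    and "L \<subseteq> bucket \<alpha> \<L> i"
    and "sinr_feasible \<alpha> N \<beta> L"
    and "e \<in> bucket \<alpha> \<L> i"
  shows "\<exists>G. G \<subseteq> rcvr ` {e'\<in>L. dlen e' \<le> dcross e' e} \<and> card G \<le> 6 \<and>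
           (\<forall>e'\<in>{e'\<in>L. dlen e' \<le> dcross e' e}. \<exists>g\<in>G. dist (sndr e') g \<le> 2 * dcross e' e)"
proof -
  define Ll where "Ll = {e'\<in>L. dlen e' \<le> dcross e' e}"
  have "finite Ll"
    using assms(1,6) finite_subset unfolding Ll_def bucket_def by fastforce
  then obtain R where R: "R \<subseteq> Ll"
    "\<forall>a\<in>R. \<forall>b\<in>R. a \<noteq> b \<longrightarrow> dist (sndr a) (sndr b) > max (dist (sndr a) (rcvr e)) (dist (sndr b) (rcvr e))"
    "\<forall>x\<in>Ll. \<exists>a\<in>R. dist (sndr a) (rcvr e) \<le> dist (sndr x) (rcvr e) \<and> dist (sndr x) (sndr a) \<le> dist (sndr x) (rcvr e)"
    by (rule greedy_net_around)
  have "card (rcvr ` R) \<le> card R"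
    using R(1) \<open>finite Ll\<close> by (intro card_image_le) (rule finite_subset)
  also have "\<dots> \<le> 6"
    using R(2) by (rule card_le_6_if_separated_around)
  finally have "card (rcvr ` R) \<le> 6" .
  moreover have "\<exists>g\<in>rcvr ` R. dist (sndr x) g \<le> 2 * dcross x e" if x: "x \<in> Ll" for x
  proof -
    obtain a where a: "a \<in> R" "dist (sndr a) (rcvr e) \<le> dist (sndr x) (rcvr e)"
      "dist (sndr x) (sndr a) \<le> dist (sndr x) (rcvr e)" using R(3) x by blast
    have "dist (sndr a) (rcvr a) \<le> dist (sndr a) (rcvr e)"
      using a(1) R(1) by (auto simp: Ll_def dlen_def dcross_def)
    hence "dist (sndr x) (rcvr a) \<le> 2 * dist (sndr x) (rcvr e)"
      using a dist_triangle[of "sndr x" "rcvr a" "sndr a"] by linarith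
    thus ?thesis using a(1) by (auto simp: dcross_def)
  qed
  moreover have "rcvr ` R \<subseteq> rcvr ` Ll" using R(1) by (rule image_mono)
  ultimately show ?thesis
    unfolding Ll_def by (intro exI[of _ "rcvr ` R"]) blast
qed

end
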